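(* Let $P$ be a finite poset and let $P_{\chi} \subseteq P$ be a $\chi$-minimal model of $P$. If $h, h' : P \to \mathbb{Z}$ are functions whose restrictions to $P_{\chi}$ coincide, $h|_{P_\chi} = h'|_{P_\chi}$, then \[ \int_{P} h \, d\chi = \int_{P} h' \, d\chi . \]
   Context: For a finite poset $P$, the zeta function is the $P \times P$ matrix with $\zeta(x,y)=1$ if $x \le y$ and $0$ otherwise; it is invertible, and the Euler characteristic of $P$ is $\chi(P) = \sum_{x,y \in P} \zeta^{-1}(x,y)$ ($\chi(\emptyset)=0$). A filter of $P$ is an upward-closed subset. For a subset $Q$, $\delta_Q$ denotes its indicator function. Every $f : P \to \mathbb{Z}$ can be written as $f = \sum_i a_i \delta_{Q_i}$ with $a_i \in \mathbb{Z}$ and $Q_i$ filters; the Euler calculus of $f$ is $\int_P f\, d\chi = \sum_i a_i \chi(Q_i)$, independent of the representation. A point $x$ of a finite poset $R$ is a $\chi$-point of $R$ if $\chi(R_{>x}) = 1$, where $R_{>x} = \{y \in R \mid y > x\}$. A $\chi$-minimal model of $P$ is a subposet (with the induced order) obtained from $P$ by repeatedly removing one point that is a $\chi$-point of the current subposet, until the current subposet has no $\chi$-points. *)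

theory Defs
  imports Main
begin

definition zeta :: "'a::order \<Rightarrow> 'a \<Rightarrow> int" where
  "zeta x y = (if x \<le> y then 1 else 0)"

definition zeta_inv :: "'a::order set \<Rightarrow> 'a \<Rightarrow> 'a \<Rightarrow> int" where
  "zeta_inv P = (THE m. (\<forall>x\<in>P. \<forall>y\<in>P. (\<Sum>z\<in>P. zeta x z * m z y) = (if x = y then 1 else 0))
                      \<and> (\<forall>x y. (x \<notin> P \<or> y \<notin> P) \<longrightarrow> m x y = 0))"

definition euler_char :: "'a::order set \<Rightarrow> int" where
  "euler_char P = (\<Sum>x\<in>P. \<Sum>y\<in>P. zeta_inv P x y)"

definition is_filter :: "'a::order set \<Rightarrow> 'a set \<Rightarrow> bool" where
  "is_filter P Q \<longleftrightarrow> Q \<subseteq> P \<and> (\<forall>x\<in>Q. \<forall>y\<in>P. x \<le> y \<longrightarrow> y \<in> Q)"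

definition indicator_fun :: "'a set \<Rightarrow> 'a \<Rightarrow> int" where
  "indicator_fun Q x = (if x \<in> Q then 1 else 0)"

definition euler_integral :: "'a::order set \<Rightarrow> ('a \<Rightarrow> int) \<Rightarrow> int" where
  "euler_integral P f = (THE c. \<exists>rep :: (int \<times> 'a set) list.
      (\<forall>(a, Q) \<in> set rep. is_filter P Q)
      \<and> (\<forall>x\<in>P. f x = (\<Sum>(a, Q) \<leftarrow> rep. a * indicator_fun Q x))
      \<and> c = (\<Sum>(a, Q) \<leftarrow> rep. a * euler_char Q))"

definition chi_point :: "'a::order set \<Rightarrow> 'a \<Rightarrow> bool" where
  "chi_point R x \<longleftrightarrow> x \<in> R \<and> euler_char {y \<in> R. y > x} = 1"

inductive chi_reduction :: "'a::order set \<Rightarrow> 'a set \<Rightarrow> bool" for P where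
  refl: "chi_reduction P P"
| step: "chi_reduction P R \<Longrightarrow> chi_point R x \<Longrightarrow> chi_reduction P (R - {x})"

definition chi_minimal_model :: "'a::order set \<Rightarrow> 'a set \<Rightarrow> bool" where
  "chi_minimal_model P M \<longleftrightarrow> chi_reduction P M \<and> \<not> (\<exists>x. chi_point M x)"

end

theory Submission
  imports Defs
begin

text \<open>Solving \<open>\<zeta> \<mu> = 1\<close> row by row gives \<open>\<Sum>\<^sub>x \<mu>(y,x) = 1 - \<chi>(P\<^sub>>\<^sub>y)\<close>; since the
inverse zeta matrix of a filter is the restriction of that of \<open>P\<close>, this yields
\<open>\<integral>\<^sub>P f d\<chi> = \<Sum>\<^sub>y f(y) (1 - \<chi>(P\<^sub>>\<^sub>y))\<close>. Removing a \<open>\<chi>\<close>-point \<open>x\<close> kills its own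
summand, and for \<open>y < x\<close> the point \<open>x\<close> is again a \<open>\<chi>\<close>-point of \<open>P\<^sub>>\<^sub>y\<close>, so by induction
on the size of the poset \<open>\<chi>(P\<^sub>>\<^sub>y)\<close> is unchanged. Hence the integral over \<open>P\<close> equals the
integral over any \<open>\<chi>\<close>-minimal model and only depends on the values there.\<close>

definition is_zeta_inverse :: "'a::order set \<Rightarrow> ('a \<Rightarrow> 'a \<Rightarrow> int) \<Rightarrow> bool" where
  "is_zeta_inverse P m \<longleftrightarrow>
     (\<forall>x\<in>P. \<forall>y\<in>P. (\<Sum>z\<in>P. zeta x z * m z y) = (if x = y then 1 else 0))
     \<and> (\<forall>x y. (x \<notin> P \<or> y \<notin> P) \<longrightarrow> m x y = 0)"

lemma sum_zeta_left:
  fixes x :: "'a::order"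
  assumes "finite S" "x \<in> S"
  shows "(\<Sum>z\<in>S. zeta x z * g z) = g x + (\<Sum>z\<in>{z\<in>S. x < z}. g z)"
proof -
  have "(\<Sum>z\<in>S. zeta x z * g z) = (\<Sum>z\<in>S. if x \<le> z then g z else 0)"
    by (intro sum.cong) (auto simp: zeta_def)
  also have "\<dots> = (\<Sum>z\<in>{z\<in>S. x \<le> z}. g z)"
    using assms(1) by (simp add: sum.inter_filter)
  also have "{z\<in>S. x \<le> z} = insert x {z\<in>S. x < z}"
    using assms(2) by auto
  finally show ?thesis
    using assms(1) by simp
qed

lemma finite_top_down_induct [consumes 2, case_names step]:
  fixes y :: "'a::order"
  assumes "finite S" "y \<in> S"
    and "\<And>y. y \<in> S \<Longrightarrow> (\<And>z. z \<in> S \<Longrightarrow> y < z \<Longrightarrow> P z) \<Longrightarrow> P y"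
  shows "P y"
  using assms(2)
proof (induction y rule: measure_induct_rule[where f = "\<lambda>y. card {z\<in>S. y < z}"])
  case (less y)
  show ?case
  proof (rule assms(3)[OF less.prems])
    fix z assume "z \<in> S" "y < z"
    then have "{w\<in>S. z < w} \<subset> {w\<in>S. y < w}"
      by (auto intro: less_trans)
    then have "card {w\<in>S. z < w} < card {w\<in>S. y < w}"
      using assms(1) by (simp add: psubset_card_mono)
    then show "P z"
      using less.IH \<open>z \<in> S\<close> by blast
  qed
qed

text \<open>Existence: adjoin a minimal element \<open>a\<close>; the rows of \<open>\<zeta>\<close> indexed by the other
points do not see \<open>a\<close>, and the new row \<open>a\<close> is solved by the recurrence.\<close>

lemma zeta_inverse_exists:
  fixes S :: "'a::order set"
  assumes "finite S"
  shows "\<exists>m. is_zeta_inverse S m"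
  using assms
proof (induction "card S" arbitrary: S rule: less_induct)
  case less
  show ?case
  proof (cases "S = {}")
    case True
    then show ?thesis
      by (intro exI[of _ "\<lambda>x y. 0"]) (auto simp: is_zeta_inverse_def)
  next
    case False
    obtain a where a: "a \<in> S" "\<And>z. z \<in> S \<Longrightarrow> z \<le> a \<Longrightarrow> a = z"
      using finite_has_minimal[OF less.prems False] by blast
    define S' where "S' = S - {a}"
    have "card S' < card S"
      unfolding S'_def using less.prems a(1) by (rule card_Diff1_less)
    then obtain m' where m': "is_zeta_inverse S' m'"
      using less.hyps less.prems S'_def by blast
    define m where "m x y =
      (if x \<in> S' then m' x y
       else if x = a \<and> y \<in> S then (if y = a then 1 else 0) - (\<Sum>z\<in>{z\<in>S'. a < z}. m' z y)
       else 0)" for x y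
    have "is_zeta_inverse S m"
      unfolding is_zeta_inverse_def
    proof (intro conjI ballI allI impI)
      fix x y assume "x \<notin> S \<or> y \<notin> S"
      then show "m x y = 0"
        using m' a(1) by (auto simp: m_def S'_def is_zeta_inverse_def)
    next
      fix x y assume x: "x \<in> S" and y: "y \<in> S"
      show "(\<Sum>z\<in>S. zeta x z * m z y) = (if x = y then 1 else 0)"
      proof (cases "x = a")
        case True
        have "{z\<in>S. a < z} = {z\<in>S'. a < z}"
          by (auto simp: S'_def)
        then have "(\<Sum>z\<in>{z\<in>S. a < z}. m z y) = (\<Sum>z\<in>{z\<in>S'. a < z}. m' z y)"
          by (auto simp: m_def intro: sum.cong)
        then show ?thesis
          using sum_zeta_left[OF less.prems a(1), of "\<lambda>z. m z y"] True y
          by (simp add: m_def S'_def)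
      next
        case False
        then have "x \<in> S'" and "zeta x a = 0"
          using x a(2)[OF x] by (auto simp: S'_def zeta_def)
        have "(\<Sum>z\<in>S. zeta x z * m z y) = zeta x a * m a y + (\<Sum>z\<in>S'. zeta x z * m z y)"
          using sum.remove[OF less.prems a(1)] S'_def by blast
        also have "\<dots> = (\<Sum>z\<in>S'. zeta x z * m' z y)"
          using \<open>zeta x a = 0\<close> by (simp add: m_def)
        also have "\<dots> = (if x = y then 1 else 0)"
          using m' \<open>x \<in> S'\<close> y by (cases "y \<in> S'") (auto simp: is_zeta_inverse_def S'_def)
        finally show ?thesis .
      qed
    qed
    then show ?thesis
      by blast
  qed
qed

lemma zeta_inverse_unique:
  fixes S :: "'a::order set"
  assumes "finite S" "is_zeta_inverse S m" "is_zeta_inverse S m'"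
  shows "m = m'"
proof (intro ext)
  fix x y
  show "m x y = m' x y"
  proof (cases "x \<in> S \<and> y \<in> S")
    case False
    then show ?thesis
      using assms by (auto simp: is_zeta_inverse_def)
  next
    case True
    then have "x \<in> S" and y: "y \<in> S"
      by simp_all
    from assms(1) \<open>x \<in> S\<close> show ?thesis
    proof (induction rule: finite_top_down_induct)
      case (step x)
      have "m x y + (\<Sum>z\<in>{z\<in>S. x < z}. m z y) = (if x = y then 1 else 0)"
        using assms(2) step.hyps y sum_zeta_left[OF assms(1) step.hyps, of "\<lambda>z. m z y"]
        by (simp add: is_zeta_inverse_def)
      moreover have "m' x y + (\<Sum>z\<in>{z\<in>S. x < z}. m' z y) = (if x = y then 1 else 0)"
        using assms(3) step.hyps y sum_zeta_left[OF assms(1) step.hyps, of "\<lambda>z. m' z y"]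
        by (simp add: is_zeta_inverse_def)
      moreover have "(\<Sum>z\<in>{z\<in>S. x < z}. m z y) = (\<Sum>z\<in>{z\<in>S. x < z}. m' z y)"
        using step.IH by (intro sum.cong) auto
      ultimately show ?case
        by simp
    qed
  qed
qed

lemma is_zeta_inverse_zeta_inv:
  fixes S :: "'a::order set"
  assumes "finite S"
  shows "is_zeta_inverse S (zeta_inv S)"
proof -
  have "\<exists>!m. is_zeta_inverse S m"
    using zeta_inverse_exists[OF assms] zeta_inverse_unique[OF assms] by blast
  then show ?thesis
    unfolding zeta_inv_def is_zeta_inverse_def[symmetric] by (rule theI')
qed

lemma zeta_inv_recurrence:
  fixes S :: "'a::order set"
  assumes "finite S" "x \<in> S" "y \<in> S"
  shows "zeta_inv S x y + (\<Sum>z\<in>{z\<in>S. x < z}. zeta_inv S z y) = (if x = y then 1 else 0)"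
  using is_zeta_inverse_zeta_inv[OF assms(1)] assms sum_zeta_left[OF assms(1,2), of "\<lambda>z. zeta_inv S z y"]
  by (simp add: is_zeta_inverse_def)

lemma zeta_inv_eq_0_if_not_le:
  fixes S :: "'a::order set"
  assumes "finite S" "\<not> x \<le> y"
  shows "zeta_inv S x y = 0"
proof (cases "x \<in> S \<and> y \<in> S")
  case False
  then show ?thesis
    using is_zeta_inverse_zeta_inv[OF assms(1)] by (auto simp: is_zeta_inverse_def)
next
  case True
  then have "x \<in> S" and y: "y \<in> S"
    by simp_all
  from assms(1) \<open>x \<in> S\<close> assms(2) show ?thesis
  proof (induction rule: finite_top_down_induct)
    case (step x)
    have "(\<Sum>z\<in>{z\<in>S. x < z}. zeta_inv S z y) = 0"
      using step.IH step.prems by (intro sum.neutral) (auto dest: less_le_trans)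
    then show ?case
      using zeta_inv_recurrence[OF assms(1) step.hyps y] step.prems by auto
  qed
qed

lemma zeta_inv_filter:
  fixes S :: "'a::order set"
  assumes "finite S" "is_filter S Q" "x \<in> Q" "y \<in> Q"
  shows "zeta_inv Q x y = zeta_inv S x y"
proof -
  have QS: "Q \<subseteq> S" and up: "\<And>a b. a \<in> Q \<Longrightarrow> b \<in> S \<Longrightarrow> a \<le> b \<Longrightarrow> b \<in> Q"
    using assms(2) by (auto simp: is_filter_def)
  have "finite Q"
    using QS assms(1) finite_subset by blast
  define m where "m x y = (if x \<in> Q \<and> y \<in> Q then zeta_inv S x y else 0)" for x y
  have "is_zeta_inverse Q m"
    unfolding is_zeta_inverse_def
  proof (intro conjI ballI allI impI)
    fix a b assume "a \<notin> Q \<or> b \<notin> Q"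
    then show "m a b = 0"
      by (auto simp: m_def)
  next
    fix a b assume a: "a \<in> Q" and b: "b \<in> Q"
    have "(\<Sum>z\<in>Q. zeta a z * m z b) = (\<Sum>z\<in>Q. zeta a z * zeta_inv S z b)"
      using b by (intro sum.cong) (auto simp: m_def)
    also have "\<dots> = (\<Sum>z\<in>S. zeta a z * zeta_inv S z b)"
      using up a by (intro sum.mono_neutral_left[OF assms(1) QS]) (auto simp: zeta_def)
    also have "\<dots> = (if a = b then 1 else 0)"
      using is_zeta_inverse_zeta_inv[OF assms(1)] a b QS unfolding is_zeta_inverse_def by blast
    finally show "(\<Sum>z\<in>Q. zeta a z * m z b) = (if a = b then 1 else 0)" .
  qed
  then have "zeta_inv Q = m"
    using zeta_inverse_unique[OF \<open>finite Q\<close>] is_zeta_inverse_zeta_inv[OF \<open>finite Q\<close>] by blast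
  then show ?thesis
    using assms(3,4) by (simp add: m_def)
qed

lemma is_filter_greater: "is_filter S {z\<in>S. (y::'a::order) < z}"
  by (auto simp: is_filter_def dest: less_le_trans)

lemma is_filter_greater_eq: "is_filter S {z\<in>S. (y::'a::order) \<le> z}"
  by (auto simp: is_filter_def dest: order_trans)

lemma euler_char_filter_row_sums:
  fixes S :: "'a::order set"
  assumes "finite S" "is_filter S Q"
  shows "euler_char Q = (\<Sum>y\<in>Q. \<Sum>x\<in>S. zeta_inv S y x)"
proof -
  have QS: "Q \<subseteq> S" and up: "\<And>a b. a \<in> Q \<Longrightarrow> b \<in> S \<Longrightarrow> a \<le> b \<Longrightarrow> b \<in> Q"
    using assms(2) by (auto simp: is_filter_def)
  have "(\<Sum>x\<in>Q. zeta_inv Q y x) = (\<Sum>x\<in>S. zeta_inv S y x)" if "y \<in> Q" for y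
    using that zeta_inv_filter[OF assms]
    by (intro sum.mono_neutral_cong_left[OF assms(1) QS])
      (auto, metis up zeta_inv_eq_0_if_not_le[OF assms(1)])
  then show ?thesis
    unfolding euler_char_def by simp
qed

lemma zeta_inv_row_sum:
  fixes S :: "'a::order set"
  assumes "finite S" "y \<in> S"
  shows "(\<Sum>x\<in>S. zeta_inv S y x) = 1 - euler_char {z\<in>S. y < z}"
proof -
  have "(\<Sum>x\<in>S. zeta_inv S y x)
      = (\<Sum>x\<in>S. (if y = x then 1 else 0) - (\<Sum>z\<in>{z\<in>S. y < z}. zeta_inv S z x))"
    using zeta_inv_recurrence[OF assms] by (intro sum.cong) (auto simp: algebra_simps)
  also have "\<dots> = 1 - (\<Sum>z\<in>{z\<in>S. y < z}. \<Sum>x\<in>S. zeta_inv S z x)"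
    using assms by (simp add: sum_subtractf sum.swap[of _ S])
  also have "\<dots> = 1 - euler_char {z\<in>S. y < z}"
    using euler_char_filter_row_sums[OF assms(1) is_filter_greater] by simp
  finally show ?thesis .
qed

lemma euler_char_filter:
  fixes S :: "'a::order set"
  assumes "finite S" "is_filter S Q"
  shows "euler_char Q = (\<Sum>y\<in>Q. 1 - euler_char {z\<in>S. y < z})"
  unfolding euler_char_filter_row_sums[OF assms]
  using assms zeta_inv_row_sum[OF assms(1)] by (intro sum.cong) (auto simp: is_filter_def)

lemma euler_char_eq_sum_greater:
  fixes S :: "'a::order set"
  assumes "finite S"
  shows "euler_char S = (\<Sum>y\<in>S. 1 - euler_char {z\<in>S. y < z})"
  using euler_char_filter[OF assms] by (simp add: is_filter_def)

lemma sum_list_sum_swap: "(\<Sum>x\<leftarrow>xs. \<Sum>y\<in>A. g x y) = (\<Sum>y\<in>A. \<Sum>x\<leftarrow>xs. g x y)"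
  by (induction xs) (simp_all add: sum.distrib)

lemma filter_representation_value:
  fixes R :: "'a::order set"
  assumes "finite R" "\<forall>(a, Q)\<in>set rep. is_filter R Q"
    and "\<forall>x\<in>R. f x = (\<Sum>(a, Q)\<leftarrow>rep. a * indicator_fun Q x)"
  shows "(\<Sum>(a, Q)\<leftarrow>rep. a * euler_char Q) = (\<Sum>y\<in>R. f y * (1 - euler_char {z\<in>R. y < z}))"
proof -
  have "euler_char Q = (\<Sum>y\<in>R. indicator_fun Q y * (1 - euler_char {z\<in>R. y < z}))"
    if "is_filter R Q" for Q
  proof -
    have "Q \<subseteq> R"
      using that by (simp add: is_filter_def)
    then have "(\<Sum>y\<in>R. indicator_fun Q y * (1 - euler_char {z\<in>R. y < z}))
        = (\<Sum>y\<in>Q. 1 - euler_char {z\<in>R. y < z})"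
      using assms(1) by (intro sum.mono_neutral_cong_right) (auto simp: indicator_fun_def)
    then show ?thesis
      using euler_char_filter[OF assms(1) that] by simp
  qed
  then have "(\<Sum>(a, Q)\<leftarrow>rep. a * euler_char Q)
      = (\<Sum>(a, Q)\<leftarrow>rep. \<Sum>y\<in>R. a * indicator_fun Q y * (1 - euler_char {z\<in>R. y < z}))"
    using assms(2) by (intro arg_cong[where f = sum_list] map_cong) (auto simp: sum_distrib_left mult.assoc)
  also have "\<dots> = (\<Sum>y\<in>R. (\<Sum>(a, Q)\<leftarrow>rep. a * indicator_fun Q y) * (1 - euler_char {z\<in>R. y < z}))"
    by (simp add: sum_list_sum_swap[where A = R, unfolded split_def] sum_list_mult_const[symmetric]
        split_def)
  also have "\<dots> = (\<Sum>y\<in>R. f y * (1 - euler_char {z\<in>R. y < z}))"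
    using assms(3) by simp
  finally show ?thesis .
qed

text \<open>The representation \<open>f = \<Sum>\<^sub>y f(y) (\<delta>\<^bsub>P\<^sub>\<ge>\<^sub>y\<^esub> - \<delta>\<^bsub>P\<^sub>>\<^sub>y\<^esub>)\<close>, built one point at a time.\<close>

lemma filter_representation_exists:
  fixes R :: "'a::order set"
  assumes "finite F"
  shows "\<exists>rep. (\<forall>(a, Q)\<in>set rep. is_filter R Q) \<and>
     (\<forall>x\<in>R. (\<Sum>(a, Q)\<leftarrow>rep. a * indicator_fun Q x) = (if x \<in> F then f x else 0))"
  using assms
proof (induction F rule: finite_induct)
  case empty
  show ?case
    by (intro exI[of _ "[]"]) simp
next
  case (insert y F)
  then obtain rep where filters: "\<forall>(a, Q)\<in>set rep. is_filter R Q"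
    and sums: "\<forall>x\<in>R. (\<Sum>(a, Q)\<leftarrow>rep. a * indicator_fun Q x) = (if x \<in> F then f x else 0)"
    by blast
  let ?rep = "(f y, {z\<in>R. y \<le> z}) # (- f y, {z\<in>R. y < z}) # rep"
  have "indicator_fun {z\<in>R. y \<le> z} x - indicator_fun {z\<in>R. y < z} x = (if x = y then 1 else 0)"
    if "x \<in> R" for x
    using that by (auto simp: indicator_fun_def less_le)
  then have "\<forall>x\<in>R. (\<Sum>(a, Q)\<leftarrow>?rep. a * indicator_fun Q x) = (if x \<in> insert y F then f x else 0)"
    using sums insert.hyps(2) by (auto simp: right_diff_distrib[symmetric])
  moreover have "\<forall>(a, Q)\<in>set ?rep. is_filter R Q"
    using filters is_filter_greater is_filter_greater_eq by auto
  ultimately show ?case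
    by blast
qed

lemma euler_integral_eq_sum_greater:
  fixes R :: "'a::order set"
  assumes "finite R"
  shows "euler_integral R f = (\<Sum>y\<in>R. f y * (1 - euler_char {z\<in>R. y < z}))"
  unfolding euler_integral_def
proof (rule the_equality)
  obtain rep where "\<forall>(a, Q)\<in>set rep. is_filter R Q"
    and "\<forall>x\<in>R. (\<Sum>(a, Q)\<leftarrow>rep. a * indicator_fun Q x) = (if x \<in> R then f x else 0)"
    using filter_representation_exists[OF assms] by blast
  then show "\<exists>rep. (\<forall>(a, Q)\<in>set rep. is_filter R Q)
      \<and> (\<forall>x\<in>R. f x = (\<Sum>(a, Q)\<leftarrow>rep. a * indicator_fun Q x))
      \<and> (\<Sum>y\<in>R. f y * (1 - euler_char {z\<in>R. y < z})) = (\<Sum>(a, Q)\<leftarrow>rep. a * euler_char Q)"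
    using filter_representation_value[OF assms] by (intro exI[of _ rep]) simp
next
  fix c
  assume "\<exists>rep. (\<forall>(a, Q)\<in>set rep. is_filter R Q)
      \<and> (\<forall>x\<in>R. f x = (\<Sum>(a, Q)\<leftarrow>rep. a * indicator_fun Q x))
      \<and> c = (\<Sum>(a, Q)\<leftarrow>rep. a * euler_char Q)"
  then show "c = (\<Sum>y\<in>R. f y * (1 - euler_char {z\<in>R. y < z}))"
    using filter_representation_value[OF assms] by auto
qed

lemma greater_Diff_chi_point:
  fixes S :: "'a::order set"
  assumes "chi_point S x" "y \<in> S"
  obtains "{z\<in>S - {x}. y < z} = {z\<in>S. y < z}"
  | "chi_point {z\<in>S. y < z} x" "{z\<in>S - {x}. y < z} = {z\<in>S. y < z} - {x}"
proof (cases "y < x")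
  case True
  then have "{z\<in>{z\<in>S. y < z}. x < z} = {z\<in>S. x < z}"
    by (auto intro: less_trans)
  then have "chi_point {z\<in>S. y < z} x"
    using assms(1) True by (simp add: chi_point_def)
  then show ?thesis
    using that(2) by blast
qed (use that(1) in auto)

lemma euler_char_Diff_chi_point:
  fixes S :: "'a::order set"
  assumes "finite S" "chi_point S x"
  shows "euler_char (S - {x}) = euler_char S"
  using assms
proof (induction "card S" arbitrary: S rule: less_induct)
  case less
  have x: "x \<in> S" "euler_char {z\<in>S. x < z} = 1"
    using less.prems(2) by (auto simp: chi_point_def)
  have greater: "euler_char {z\<in>S - {x}. y < z} = euler_char {z\<in>S. y < z}" if "y \<in> S" for y
  proof (cases rule: greater_Diff_chi_point[OF less.prems(2) that])
    case 2
    have "card {z\<in>S. y < z} < card S"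
      using that less.prems(1) by (intro psubset_card_mono) auto
    then show ?thesis
      using less.hyps 2 less.prems(1) by simp
  qed simp
  have "euler_char S = (1 - euler_char {z\<in>S. x < z}) + (\<Sum>y\<in>S - {x}. 1 - euler_char {z\<in>S. y < z})"
    using euler_char_eq_sum_greater[OF less.prems(1)] sum.remove[OF less.prems(1) x(1)] by simp
  also have "\<dots> = (\<Sum>y\<in>S - {x}. 1 - euler_char {z\<in>S - {x}. y < z})"
    using x(2) greater by simp
  also have "\<dots> = euler_char (S - {x})"
    using euler_char_eq_sum_greater[of "S - {x}"] less.prems(1) by simp
  finally show ?case
    by simp
qed

lemma euler_integral_Diff_chi_point:
  fixes R :: "'a::order set"
  assumes "finite R" "chi_point R x"
  shows "euler_integral (R - {x}) f = euler_integral R f"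
proof -
  have x: "x \<in> R" "euler_char {z\<in>R. x < z} = 1"
    using assms(2) by (auto simp: chi_point_def)
  have greater: "euler_char {z\<in>R - {x}. y < z} = euler_char {z\<in>R. y < z}" if "y \<in> R" for y
    using assms(1) euler_char_Diff_chi_point[of "{z\<in>R. y < z}" x]
    by (cases rule: greater_Diff_chi_point[OF assms(2) that]) simp_all
  have "euler_integral R f
      = f x * (1 - euler_char {z\<in>R. x < z}) + (\<Sum>y\<in>R - {x}. f y * (1 - euler_char {z\<in>R. y < z}))"
    using euler_integral_eq_sum_greater[OF assms(1)] sum.remove[OF assms(1) x(1)] by simp
  also have "\<dots> = (\<Sum>y\<in>R - {x}. f y * (1 - euler_char {z\<in>R - {x}. y < z}))"
    using x(2) greater by simp
  also have "\<dots> = euler_integral (R - {x}) f"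
    using euler_integral_eq_sum_greater[of "R - {x}"] assms(1) by simp
  finally show ?thesis
    by simp
qed

lemma chi_reduction_subset: "chi_reduction P R \<Longrightarrow> R \<subseteq> P"
  by (induction rule: chi_reduction.induct) auto

lemma euler_integral_chi_reduction:
  fixes P :: "'a::order set"
  assumes "finite P" "chi_reduction P R"
  shows "euler_integral R f = euler_integral P f"
  using assms(2)
proof (induction rule: chi_reduction.induct)
  case (step R x)
  have "finite R"
    using chi_reduction_subset[OF step.hyps(1)] assms(1) by (rule finite_subset)
  then show ?case
    using step.IH euler_integral_Diff_chi_point[OF _ step.hyps(2)] by simp
qed simp

theorem corollary4p2:
  fixes P Pchi :: "'a::order set" and h h' :: "'a \<Rightarrow> int"
  assumes "finite P"
    and "chi_minimal_model P Pchi"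
    and "\<forall>x\<in>Pchi. h x = h' x"
  shows "euler_integral P h = euler_integral P h'"
proof -
  have red: "chi_reduction P Pchi"
    using assms(2) by (simp add: chi_minimal_model_def)
  then have "finite Pchi"
    using chi_reduction_subset assms(1) finite_subset by blast
  have "euler_integral P h = euler_integral Pchi h"
    using euler_integral_chi_reduction[OF assms(1) red] by simp
  also have "\<dots> = euler_integral Pchi h'"
    using euler_integral_eq_sum_greater[OF \<open>finite Pchi\<close>] assms(3) by simp
  also have "\<dots> = euler_integral P h'"
    using euler_integral_chi_reduction[OF assms(1) red] by simp
  finally show ?thesis .
qed

end
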